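(* The disjoint-greedy algorithm has approximation ratio $\Omega\!\left(\frac{n}{\log^2 n}\right)$ for the minimum-cardinality island partition problem. That is, there exist a constant $c>0$ and inputs $S$ with arbitrarily large numbers $n$ of points such that the island partition returned by disjoint-greedy on $S$ contains at least $c\cdot \frac{n}{\log^2 n}\cdot \mathrm{Opt}_{\mathrm{P}}(S)$ islands.
   Context: The input is a set $S$ of $n$ points in the plane, each having one of $k\ge 2$ colors. A set of points is monochromatic if all its points have the same color. An island is a subset $I\subseteq S$ with $\mathrm{CH}(I)\cap S = I$, where $\mathrm{CH}(I)$ is the convex hull of $I$. An island partition of $S$ is a partition of $S$ into monochromatic islands whose convex hulls are pairwise disjoint; $\mathrm{Opt}_{\mathrm{P}}(S)$ denotes the minimum number of islands in an island partition of $S$. The disjoint-greedy algorithm builds an island partition by repeatedly choosing, among all monochromatic islands whose convex hull is disjoint from the convex hulls of all islands chosen so far, one that covers the largest number of not-yet-covered points of $S$, until all points of $S$ are covered. *)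

theory Defs
  imports "HOL-Analysis.Analysis"
begin

type_synonym point = "real \<times> real"

definition monochromatic :: "(point \<Rightarrow> nat) \<Rightarrow> point set \<Rightarrow> bool" where
  "monochromatic col I \<longleftrightarrow> (\<forall>x\<in>I. \<forall>y\<in>I. col x = col y)"

definition island :: "point set \<Rightarrow> point set \<Rightarrow> bool" where
  "island S I \<longleftrightarrow> I \<subseteq> S \<and> convex hull I \<inter> S = I"

definition island_partition :: "point set \<Rightarrow> (point \<Rightarrow> nat) \<Rightarrow> point set set \<Rightarrow> bool" where
  "island_partition S col P \<longleftrightarrow>
     finite P \<and> \<Union>P = S \<and> {} \<notin> P \<and>
     (\<forall>I\<in>P. monochromatic col I \<and> island S I) \<and>
     (\<forall>I\<in>P. \<forall>J\<in>P. I \<noteq> J \<longrightarrow> convex hull I \<inter> convex hull J = {})"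

definition Opt_P :: "point set \<Rightarrow> (point \<Rightarrow> nat) \<Rightarrow> nat" where
  "Opt_P S col = Min {card P | P. island_partition S col P}"

definition greedy_candidate :: "point set \<Rightarrow> (point \<Rightarrow> nat) \<Rightarrow> point set list \<Rightarrow> point set \<Rightarrow> bool" where
  "greedy_candidate S col prev J \<longleftrightarrow>
     monochromatic col J \<and> island S J \<and>
     (\<forall>I\<in>set prev. convex hull J \<inter> convex hull I = {})"

text \<open>A complete run of disjoint-greedy (with arbitrary tie-breaking), given as the list of
  islands in the order they are chosen.\<close>
definition greedy_run :: "point set \<Rightarrow> (point \<Rightarrow> nat) \<Rightarrow> point set list \<Rightarrow> bool" where
  "greedy_run S col Is \<longleftrightarrow>
     (\<forall>j < length Is.
        \<Union>(set (take j Is)) \<noteq> S \<and>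
        greedy_candidate S col (take j Is) (Is ! j) \<and>
        (\<forall>J. greedy_candidate S col (take j Is) J \<longrightarrow>
              card (J - \<Union>(set (take j Is))) \<le> card (Is ! j - \<Union>(set (take j Is))))) \<and>
     \<Union>(set Is) = S"

end

theory Submission
  imports Defs
begin

(* Fix D >= 1, let M = 2^(D+1) - 1 and let v(p) be the 2-adic valuation of p.  The red points
   form M strips side by side: strip p is a grid of 2^v(p) columns and D + 1 rows inside the unit
   column [3p, 3p+1].  In each of the M - 1 gaps between consecutive strips there are 2D blue
   points, just above the rows 0, ..., D-1 and just below the rows 1, ..., D, and the blue points
   of each of these 2D heights get a colour of their own.

   A red island meeting two rows contains, in each row, points of only one strip: two points of a
   row in different strips span, together with a point of another row, a triangle that contains a
   blue point.  Hence, once every strip p with v(p) > h has been chosen, a monochromatic island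
   avoiding them has at most (D + 1) 2^h points: a red island within one row, and likewise a blue
   island, cannot straddle a chosen strip and so stays inside one dyadic block of 2^(h+1)
   consecutive indices, and the widths 2^v(p) over such a block sum to (h + 1) 2^h.  So
   disjoint-greedy may choose the strips in order of decreasing v, each time one of maximal size
   (D + 1) 2^v(p), after which only blue singletons remain: about D 2^(D+2) islands in total.
   The 3D + 1 horizontal rows form an island partition, and n is of order D^2 2^D, so that
   n / log^2 n * Opt_P is of order D 2^D. *)

section \<open>Arithmetic\<close>

lemma power2_dvd_iff_le_multiplicity:
  fixes n :: nat
  assumes "0 < n"
  shows "2 ^ k dvd n \<longleftrightarrow> k \<le> multiplicity 2 n"
  using assms by (intro power_dvd_iff_le_multiplicity) auto

lemma multiplicity_2_power_times_odd:
  fixes m :: nat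
  assumes "odd m"
  shows "multiplicity 2 (2 ^ k * m) = k"
proof -
  have pos: "0 < 2 ^ k * m"
    using assms by (simp add: odd_pos)
  have "\<not> 2 ^ Suc k dvd 2 ^ k * m"
    using assms by simp
  then have "multiplicity 2 (2 ^ k * m) < Suc k"
    using power2_dvd_iff_le_multiplicity[OF pos, of "Suc k"] by simp
  moreover have "k \<le> multiplicity 2 (2 ^ k * m)"
    using power2_dvd_iff_le_multiplicity[OF pos, of k] by simp
  ultimately show ?thesis
    by simp
qed

lemma multiplicity_2_less:
  fixes n :: nat
  assumes "0 < n" "n < 2 ^ Suc D"
  shows "multiplicity 2 n \<le> D"
proof -
  have "2 ^ multiplicity 2 n \<le> n"
    using assms(1) by (intro dvd_imp_le multiplicity_dvd)
  then have "2 ^ multiplicity 2 n < (2::nat) ^ Suc D"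
    using assms(2) by linarith
  then show ?thesis
    using power_less_imp_less_exp[of "2::nat" "multiplicity 2 n" "Suc D"] by simp
qed

lemma sum_power_multiplicity_dyadic_block:
  fixes b :: nat
  assumes "2 ^ n dvd b"
  shows "2 * (\<Sum>p\<in>{b<..<b + 2 ^ n}. 2 ^ multiplicity 2 p) = n * (2::nat) ^ n"
  using assms
proof (induction n arbitrary: b)
  case 0
  then show ?case by simp
next
  case (Suc n)
  obtain c where b: "b = 2 ^ n * (2 * c)"
    using Suc.prems by (auto simp: mult.assoc)
  define m where "m = b + 2 ^ n"
  have m: "m = 2 ^ n * (2 * c + 1)"
    by (simp add: m_def b distrib_left)
  have mid: "multiplicity 2 m = n"
    unfolding m by (rule multiplicity_2_power_times_odd) simp
  have left: "2 * (\<Sum>p\<in>{b<..<m}. 2 ^ multiplicity 2 p) = n * (2::nat) ^ n"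
    unfolding m_def by (rule Suc.IH) (simp only: b dvd_triv_left)
  have right: "2 * (\<Sum>p\<in>{m<..<m + 2 ^ n}. 2 ^ multiplicity 2 p) = n * (2::nat) ^ n"
    by (rule Suc.IH) (simp only: m dvd_triv_left)
  have halves: "{b<..<b + 2 ^ Suc n} = ({b<..<m} \<union> {m}) \<union> {m<..<m + 2 ^ n}"
    by (auto simp: m_def)
  have "(\<Sum>p\<in>{b<..<b + 2 ^ Suc n}. (2::nat) ^ multiplicity 2 p)
      = ((\<Sum>p\<in>{b<..<m}. 2 ^ multiplicity 2 p) + 2 ^ multiplicity 2 m)
        + (\<Sum>p\<in>{m<..<m + 2 ^ n}. 2 ^ multiplicity 2 p)"
    unfolding halves by (subst sum.union_disjoint; simp; subst sum.union_disjoint; simp)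
  then show ?case
    using left right mid by simp
qed

lemma div_eq_if_no_multiple_between:
  fixes a b H :: nat
  assumes "a \<le> b" and no_multiple: "\<And>m. a < m \<Longrightarrow> m \<le> b \<Longrightarrow> \<not> H dvd m"
  shows "b div H = a div H"
proof (cases "H = 0")
  case False
  define m where "m = H * (a div H + 1)"
  have "a = H * (a div H) + a mod H" "a mod H < H" "m = H * (a div H) + H"
    using False by (simp_all add: m_def)
  then have "a < m"
    by linarith
  moreover have "H dvd m"
    by (simp add: m_def)
  ultimately have "b < m"
    using no_multiple by force
  then have "b div H < a div H + 1"
    by (simp add: m_def less_mult_imp_div_less mult.commute)
  moreover have "a div H \<le> b div H"
    using assms(1) by (rule div_le_mono)
  ultimately show ?thesis
    by linarith
qed simp

lemma mem_block_if_not_dvd: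
  fixes p H c :: nat
  assumes "p div H = c" "\<not> H dvd p" "0 < H"
  shows "p \<in> {H * c<..<H * c + H}"
proof -
  have "p = H * c + p mod H" "0 < p mod H" "p mod H < H"
    using assms div_mult_mod_eq[of p H] by (simp_all add: dvd_eq_mod_eq_0 mult.commute)
  then show ?thesis
    by simp
qed

lemma card_div_fibre:
  fixes H c :: nat
  assumes "0 < H"
  shows "card {q. q div H = c} = H"
proof -
  have "{q. q div H = c} = {c * H..<c * H + H}"
  proof (intro set_eqI iffI)
    fix q
    assume "q \<in> {q. q div H = c}"
    then have "q = c * H + q mod H"
      using div_mult_mod_eq[of q H] by simp
    moreover have "q mod H < H"
      using assms by simp
    ultimately show "q \<in> {c * H..<c * H + H}"
      unfolding atLeastLessThan_iff by linarith
  next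
    fix q
    assume "q \<in> {c * H..<c * H + H}"
    then show "q \<in> {q. q div H = c}"
      by (simp add: div_nat_eqI algebra_simps)
  qed
  then show ?thesis by simp
qed

lemma of_nat_triple_le_imp_le:
  assumes "3 * real a \<le> 3 * real b + 1"
  shows "a \<le> b"
proof -
  have "real (3 * a) \<le> real (3 * b + 1)"
    using assms by simp
  then show ?thesis
    by (simp only: of_nat_le_iff)
qed

lemma of_nat_plus_fraction_neq_of_nat:
  fixes e :: real
  assumes "0 < e" "e < 1"
  shows "real a + e \<noteq> real b"
proof (cases "a < b")
  case True
  then have "real (a + 1) \<le> real b"
    by simp
  then show ?thesis
    using assms(2) by linarith
qed (use assms(1) in auto)

section \<open>Convex hulls in the plane\<close>

lemma Pair_mem_closed_segment_same_snd:
  fixes x a b c :: real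
  assumes "x \<in> closed_segment a b"
  shows "(x, c) \<in> closed_segment (a, c) (b, c)"
proof -
  obtain u where u: "0 \<le> u" "u \<le> 1" "x = (1 - u) * a + u * b"
    using assms by (auto simp: closed_segment_def)
  then have "(x, c) = (1 - u) *\<^sub>R (a, c) + u *\<^sub>R (b, c)"
    by (simp add: algebra_simps)
  then show ?thesis
    using u(1,2) unfolding closed_segment_def by blast
qed

lemma Pair_mem_closed_segment_same_fst:
  fixes y a b c :: real
  assumes "y \<in> closed_segment a b"
  shows "(c, y) \<in> closed_segment (c, a) (c, b)"
proof -
  obtain u where u: "0 \<le> u" "u \<le> 1" "y = (1 - u) * a + u * b"
    using assms by (auto simp: closed_segment_def)
  then have "(c, y) = (1 - u) *\<^sub>R (c, a) + u *\<^sub>R (c, b)"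
    by (simp add: algebra_simps)
  then show ?thesis
    using u(1,2) unfolding closed_segment_def by blast
qed

lemma horizontal_mem_convex_hull:
  fixes A :: "point set"
  assumes "(a, c) \<in> A" "(b, c) \<in> A" "a \<le> x" "x \<le> b"
  shows "(x, c) \<in> convex hull A"
proof -
  have "(x, c) \<in> closed_segment (a, c) (b, c)"
    using assms(3,4) by (intro Pair_mem_closed_segment_same_snd) (simp add: closed_segment_eq_real_ivl1)
  moreover have "closed_segment (a, c) (b, c) \<subseteq> convex hull A"
    using assms(1,2) by (intro closed_segment_subset_convex_hull) (auto intro: hull_inc)
  ultimately show ?thesis by blast
qed

lemma vertical_mem_convex_hull:
  fixes A :: "point set"
  assumes "(c, a) \<in> A" "(c, b) \<in> A" "a \<le> y" "y \<le> b"
  shows "(c, y) \<in> convex hull A"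
proof -
  have "(c, y) \<in> closed_segment (c, a) (c, b)"
    using assms(3,4) by (intro Pair_mem_closed_segment_same_fst) (simp add: closed_segment_eq_real_ivl1)
  moreover have "closed_segment (c, a) (c, b) \<subseteq> convex hull A"
    using assms(1,2) by (intro closed_segment_subset_convex_hull) (auto intro: hull_inc)
  ultimately show ?thesis by blast
qed

text \<open>Moving the two points \<open>a\<close>, \<open>a'\<close> of height \<open>c\<close> the fraction \<open>t\<close> of the way
  towards \<open>q\<close> gives a horizontal segment in the hull of the triangle.\<close>
lemma horizontal_section_mem_convex_hull:
  fixes A :: "point set"
  assumes "a \<in> A" "a' \<in> A" "q \<in> A" "snd a = c" "snd a' = c" "0 \<le> t" "t \<le> 1"
    and "fst a + t * (fst q - fst a) \<le> x" "x \<le> fst a' + t * (fst q - fst a')"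
  shows "(x, c + t * (snd q - c)) \<in> convex hull A"
proof -
  have "(1 - t) *\<^sub>R a + t *\<^sub>R q \<in> convex hull A" "(1 - t) *\<^sub>R a' + t *\<^sub>R q \<in> convex hull A"
    using assms(1-3,6,7) by (auto intro!: convexD[OF convex_convex_hull] intro: hull_inc)
  moreover have "(1 - t) *\<^sub>R a + t *\<^sub>R q = (fst a + t * (fst q - fst a), c + t * (snd q - c))"
    "(1 - t) *\<^sub>R a' + t *\<^sub>R q = (fst a' + t * (fst q - fst a'), c + t * (snd q - c))"
    using assms(4,5) by (simp_all add: prod_eq_iff algebra_simps)
  ultimately have "(fst a + t * (fst q - fst a), c + t * (snd q - c)) \<in> convex hull A"
    "(fst a' + t * (fst q - fst a'), c + t * (snd q - c)) \<in> convex hull A"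
    by simp_all
  then have "(x, c + t * (snd q - c)) \<in> convex hull (convex hull A)"
    using assms(8,9) by (rule horizontal_mem_convex_hull)
  then show ?thesis
    by (simp add: hull_hull)
qed

lemma convex_hull_Int_nonempty:
  assumes "A \<inter> B \<noteq> {}"
  shows "convex hull A \<inter> convex hull B \<noteq> {}"
  using assms hull_subset[of A convex] hull_subset[of B convex] by auto

lemma convex_hull_subset_horizontal_line:
  fixes A :: "point set"
  assumes "A \<subseteq> {z. snd z = c}"
  shows "convex hull A \<subseteq> {z. snd z = c}"
proof (rule hull_minimal[OF assms])
  have "{z::point. snd z = c} = UNIV \<times> {c}"
    by auto
  then show "convex {z::point. snd z = c}"
    by (simp add: convex_Times)
qed

section \<open>Island partitions and greedy runs\<close>

lemma Opt_P_le_card: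
  assumes "finite S" "island_partition S col P"
  shows "Opt_P S col \<le> card P"
proof -
  have "{card P | P. island_partition S col P} \<subseteq> card ` Pow (Pow S)"
    unfolding island_partition_def by auto
  then have "finite {card P | P. island_partition S col P}"
    using assms(1) finite_subset by blast
  then show ?thesis
    unfolding Opt_P_def using assms(2) by (intro Min_le) auto
qed

lemma island_partition_rows:
  assumes "\<And>z. z \<in> S \<Longrightarrow> col z = f (snd z)" "finite S"
  shows "island_partition S col ((\<lambda>c. S \<inter> {z. snd z = c}) ` snd ` S)"
  unfolding island_partition_def
proof (intro conjI ballI impI)
  fix I
  assume "I \<in> (\<lambda>c. S \<inter> {z. snd z = c}) ` snd ` S"
  then obtain c where I: "I = S \<inter> {z. snd z = c}"
    by auto
  then have hull_I: "convex hull I \<subseteq> {z. snd z = c}"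
    by (intro convex_hull_subset_horizontal_line) auto
  show "monochromatic col I"
    unfolding monochromatic_def I using assms(1) by auto
  have "convex hull I \<inter> S \<subseteq> I"
    using hull_I I by auto
  then show "island S I"
    unfolding island_def using hull_subset[of I convex] I by auto
  fix J
  assume "J \<in> (\<lambda>c. S \<inter> {z. snd z = c}) ` snd ` S" "I \<noteq> J"
  then obtain c' where J: "J = S \<inter> {z. snd z = c'}"
    by auto
  with I \<open>I \<noteq> J\<close> have "c' \<noteq> c"
    by auto
  have "convex hull J \<subseteq> {z. snd z = c'}"
    using J by (intro convex_hull_subset_horizontal_line) auto
  then show "convex hull I \<inter> convex hull J = {}"
    using hull_I \<open>c' \<noteq> c\<close> by auto
qed (use assms(2) in auto)

lemma Opt_P_le_card_rows:
  assumes "\<And>z. z \<in> S \<Longrightarrow> col z = f (snd z)" "finite S"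
  shows "Opt_P S col \<le> card (snd ` S)"
proof -
  have "Opt_P S col \<le> card ((\<lambda>c. S \<inter> {z. snd z = c}) ` snd ` S)"
    by (rule Opt_P_le_card[OF assms(2) island_partition_rows[of S col f, OF assms]])
  also have "\<dots> \<le> card (snd ` S)"
    using assms(2) by (intro card_image_le) simp
  finally show ?thesis .
qed

lemma nth_notin_set_take:
  assumes "distinct xs" "j < length xs"
  shows "xs ! j \<notin> set (take j xs)"
  using assms by (auto simp: in_set_conv_nth nth_eq_iff_index_eq)

lemma sorted_key_less_in_set_take:
  assumes "sorted (map f xs)" "j < length xs" "x \<in> set xs" "f x < f (xs ! j)"
  shows "x \<in> set (take j xs)"
proof -
  obtain i where i: "i < length xs" "xs ! i = x"
    using assms(3) by (auto simp: in_set_conv_nth)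
  have "i < j"
  proof (rule ccontr)
    assume "\<not> i < j"
    then have "map f xs ! j \<le> map f xs ! i"
      using assms(1) i(1) by (intro sorted_nth_mono) auto
    then show False
      using assms(2,4) i by simp
  qed
  then show ?thesis
    using i assms(2) by (auto simp: in_set_conv_nth intro: exI[of _ i])
qed

definition greedy_choice :: "point set \<Rightarrow> (point \<Rightarrow> nat) \<Rightarrow> point set list \<Rightarrow> point set \<Rightarrow> bool" where
  "greedy_choice S col prev I \<longleftrightarrow>
     I \<noteq> {} \<and> I \<inter> \<Union>(set prev) = {} \<and> greedy_candidate S col prev I \<and>
     (\<forall>J. greedy_candidate S col prev J \<longrightarrow> card J \<le> card I)"

lemma greedy_run_if_greedy_choice:
  assumes "finite S" "\<Union>(set Is) = S"
    and choice: "\<And>j. j < length Is \<Longrightarrow> greedy_choice S col (take j Is) (Is ! j)"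
  shows "greedy_run S col Is"
  unfolding greedy_run_def
proof (intro conjI allI impI assms(2))
  fix j
  assume j: "j < length Is"
  let ?U = "\<Union>(set (take j Is))"
  have c: "Is ! j \<noteq> {}" "Is ! j \<inter> ?U = {}" "greedy_candidate S col (take j Is) (Is ! j)"
    "\<And>J. greedy_candidate S col (take j Is) J \<Longrightarrow> card J \<le> card (Is ! j)"
    using choice[OF j] by (simp_all add: greedy_choice_def)
  have "Is ! j \<subseteq> S"
    using c(3) by (simp add: greedy_candidate_def island_def)
  then show "?U \<noteq> S"
    using c(1,2) by blast
  show "greedy_candidate S col (take j Is) (Is ! j)"
    by (fact c(3))
  fix J
  assume J: "greedy_candidate S col (take j Is) J"
  then have "finite J"
    using assms(1) finite_subset by (auto simp: greedy_candidate_def island_def)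
  then have "card (J - ?U) \<le> card J"
    by (intro card_mono) auto
  also have "\<dots> \<le> card (Is ! j)"
    using J by (rule c(4))
  also have "\<dots> = card (Is ! j - ?U)"
    using c(2) by (simp add: Diff_triv)
  finally show "card (J - ?U) \<le> card (Is ! j - ?U)" .
qed

section \<open>The construction\<close>

locale greedy_lower_bound_instance =
  fixes D :: nat
  assumes D_pos: "1 \<le> D"
begin

definition M :: nat where
  "M = 2 ^ Suc D - 1"

definition width :: "nat \<Rightarrow> nat" where
  "width p = 2 ^ multiplicity 2 p"

definition red :: "nat \<Rightarrow> nat \<Rightarrow> nat \<Rightarrow> point" where
  "red p i y = (3 * real p + real i / real (width p), real y)"

definition strip :: "nat \<Rightarrow> point set" where
  "strip p = {red p i y | i y. i < width p \<and> y \<le> D}"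

definition \<delta> :: real where
  "\<delta> = 1 / (3 * real M + 4)"

definition blue_y :: "nat \<Rightarrow> real" where
  "blue_y j = (if j < D then real j + \<delta> else real (j - D) + 1 - \<delta>)"

definition blue :: "nat \<Rightarrow> nat \<Rightarrow> point" where
  "blue q j = (3 * real q + 2, blue_y j)"

definition Red :: "point set" where
  "Red = (\<Union>p\<in>{1..M}. strip p)"

definition Blue :: "point set" where
  "Blue = {blue q j | q j. q \<in> {1..<M} \<and> j < 2 * D}"

definition Pts :: "point set" where
  "Pts = Red \<union> Blue"

definition colour :: "point \<Rightarrow> nat" where
  "colour z = (if \<exists>j<2 * D. snd z = blue_y j then Suc (THE j. j < 2 * D \<and> snd z = blue_y j) else 0)"

lemma M_plus_1: "M + 1 = 2 ^ Suc D"
  by (simp add: M_def)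

lemma M_ge: "2 ^ D \<le> M" "3 \<le> M"
proof -
  have "2 ^ 1 \<le> (2::nat) ^ D"
    using D_pos by (rule power_increasing) simp
  then show "2 ^ D \<le> M" "3 \<le> M"
    using M_plus_1 by simp_all
qed

lemma \<delta>_pos: "0 < \<delta>"
  by (simp add: \<delta>_def add_pos_nonneg)

lemma \<delta>_less_half: "\<delta> < 1 / 2"
  using M_ge by (simp add: \<delta>_def divide_simps)

lemma \<delta>_times_3M_less_1: "\<delta> * (3 * real M) < 1"
  by (simp add: \<delta>_def divide_simps)

lemma width_pos [simp]: "0 < width p"
  by (simp add: width_def)

lemma multiplicity_le_D: "p \<in> {1..M} \<Longrightarrow> multiplicity 2 p \<le> D"
  using multiplicity_2_less[of p D] M_plus_1 by simp

lemma blue_y_between_rows: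
  assumes "j < 2 * D"
  obtains k where "k < D" "real k < blue_y j" "blue_y j < real k + 1"
proof (cases "j < D")
  case True
  then show ?thesis
    using that[of j] \<delta>_pos \<delta>_less_half by (simp add: blue_y_def)
next
  case False
  then show ?thesis
    using that[of "j - D"] assms \<delta>_pos \<delta>_less_half by (simp add: blue_y_def)
qed

lemma blue_y_bounds: "j < 2 * D \<Longrightarrow> 0 < blue_y j \<and> blue_y j < real D"
  by (rule blue_y_between_rows) (simp_all, linarith)

lemma blue_y_neq_of_nat:
  assumes "j < 2 * D"
  shows "blue_y j \<noteq> real y"
proof -
  obtain k where "real k < blue_y j" "blue_y j < real k + 1"
    using assms by (rule blue_y_between_rows)
  then have "real k + (blue_y j - real k) \<noteq> real y"
    by (intro of_nat_plus_fraction_neq_of_nat) simp_all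
  then show ?thesis
    by simp
qed

lemma blue_y_inj: "inj_on blue_y {..<2 * D}"
proof (rule inj_onI)
  fix j j'
  assume j: "j \<in> {..<2 * D}" "j' \<in> {..<2 * D}" and eq: "blue_y j = blue_y j'"
  show "j = j'"
  proof (cases "j < D \<longleftrightarrow> j' < D")
    case True
    then show ?thesis
      using eq j by (auto simp: blue_y_def split: if_splits)
  next
    case False
    then have "real (j + D) + 2 * \<delta> = real (j' + 1) \<or> real (j' + D) + 2 * \<delta> = real (j + 1)"
      using eq j by (auto simp: blue_y_def split: if_splits)
    moreover have "0 < 2 * \<delta>" "2 * \<delta> < 1"
      using \<delta>_pos \<delta>_less_half by simp_all
    ultimately show ?thesis
      using of_nat_plus_fraction_neq_of_nat by blast
  qed
qed

lemma colour_red [simp]: "colour (red p i y) = 0"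
proof -
  have "\<not> (\<exists>j<2 * D. real y = blue_y j)"
    using blue_y_neq_of_nat by (metis)
  then show ?thesis
    by (simp add: colour_def red_def)
qed

lemma colour_blue: "j < 2 * D \<Longrightarrow> colour (blue q j) = Suc j"
  using blue_y_inj by (auto simp: colour_def blue_def inj_on_def intro: the_equality)

lemma mem_strip: "z \<in> strip p \<longleftrightarrow> (\<exists>i y. i < width p \<and> y \<le> D \<and> z = red p i y)"
  by (auto simp: strip_def)

lemma red_in_strip: "i < width p \<Longrightarrow> y \<le> D \<Longrightarrow> red p i y \<in> strip p"
  by (auto simp: strip_def)

lemma snd_red [simp]: "snd (red p i y) = real y"
  by (simp add: red_def)

lemma red_0: "red p 0 y = (3 * real p, real y)"
  by (simp add: red_def)

lemma fst_red_bounds: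
  assumes "i < width p"
  shows "3 * real p \<le> fst (red p i y)" "fst (red p i y) < 3 * real p + 1"
  using assms by (simp_all add: red_def)

lemma red_inj: "red p i y = red p i' y' \<Longrightarrow> i = i' \<and> y = y'"
  using width_pos[of p] by (auto simp: red_def)

lemma strip_subset_box: "strip p \<subseteq> {3 * real p..3 * real p + 1} \<times> {0..real D}"
proof
  fix z
  assume "z \<in> strip p"
  then obtain i y where "i < width p" "y \<le> D" "z = red p i y"
    by (auto simp: mem_strip)
  then show "z \<in> {3 * real p..3 * real p + 1} \<times> {0..real D}"
    using fst_red_bounds[of i p y] by (simp add: mem_Times_iff)
qed

lemma convex_hull_strip_subset_box:
  "convex hull strip p \<subseteq> {3 * real p..3 * real p + 1} \<times> {0..real D}"
  by (rule hull_minimal[OF strip_subset_box]) (simp add: convex_Times)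

lemma mem_Red: "z \<in> Red \<longleftrightarrow> (\<exists>p\<in>{1..M}. z \<in> strip p)"
  by (simp add: Red_def)

lemma mem_Blue: "z \<in> Blue \<longleftrightarrow> (\<exists>q j. q \<in> {1..<M} \<and> j < 2 * D \<and> z = blue q j)"
  by (auto simp: Blue_def)

lemma blue_notin_strip: "j < 2 * D \<Longrightarrow> blue q j \<notin> strip p"
  using blue_y_neq_of_nat by (force simp: mem_strip blue_def red_def)

lemma Red_Blue_disjoint: "Red \<inter> Blue = {}"
  using blue_notin_strip by (auto simp: mem_Red mem_Blue)

lemma strip_subset_Pts: "p \<in> {1..M} \<Longrightarrow> strip p \<subseteq> Pts"
  by (auto simp: Pts_def Red_def)

lemma Pts_in_box_imp_strip:
  assumes "z \<in> Pts" "z \<in> {3 * real p..3 * real p + 1} \<times> {0..real D}"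
  shows "z \<in> strip p"
proof (cases "z \<in> Red")
  case True
  then obtain p' where "z \<in> strip p'"
    by (auto simp: mem_Red)
  then have "z \<in> {3 * real p'..3 * real p' + 1} \<times> {0..real D}"
    using strip_subset_box by blast
  then have "p' \<le> p" "p \<le> p'"
    using assms(2) by (auto intro!: of_nat_triple_le_imp_le)
  then show ?thesis
    using \<open>z \<in> strip p'\<close> by simp
next
  case False
  then obtain q j where "z = blue q j"
    using assms(1) by (auto simp: Pts_def mem_Blue)
  then have "real (3 * p) \<le> real (3 * q + 2)" "real (3 * q + 2) \<le> real (3 * p + 1)"
    using assms(2) by (auto simp: blue_def)
  then have "3 * p \<le> 3 * q + 2" "3 * q + 2 \<le> 3 * p + 1"
    by (simp_all only: of_nat_le_iff)
  then show ?thesis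
    by presburger
qed

lemma convex_hull_strip_Int_Pts:
  assumes "p \<in> {1..M}"
  shows "convex hull (strip p) \<inter> Pts = strip p"
proof (intro equalityI subsetI)
  fix z
  assume "z \<in> convex hull (strip p) \<inter> Pts"
  then have "z \<in> Pts" "z \<in> {3 * real p..3 * real p + 1} \<times> {0..real D}"
    using convex_hull_strip_subset_box by auto
  then show "z \<in> strip p"
    by (rule Pts_in_box_imp_strip)
qed (use assms strip_subset_Pts hull_inc in auto)

lemma convex_hull_strips_disjoint:
  assumes "p \<noteq> p'"
  shows "convex hull (strip p) \<inter> convex hull (strip p') = {}"
proof -
  have "{3 * real p..3 * real p + 1} \<inter> {3 * real p'..3 * real p' + 1} = {}"
    using assms of_nat_triple_le_imp_le[of p p'] of_nat_triple_le_imp_le[of p' p] by auto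
  then show ?thesis
    using convex_hull_strip_subset_box[of p] convex_hull_strip_subset_box[of p'] by blast
qed

lemma strips_disjoint:
  assumes "p \<noteq> p'"
  shows "strip p \<inter> strip p' = {}"
proof -
  have "strip p \<subseteq> convex hull strip p" "strip p' \<subseteq> convex hull strip p'"
    by (rule hull_subset)+
  then show ?thesis
    using convex_hull_strips_disjoint[OF assms] by auto
qed

lemma Blue_disjoint_convex_hull_strip:
  assumes "b \<in> Blue"
  shows "b \<notin> convex hull (strip p)"
proof
  assume "b \<in> convex hull (strip p)"
  then have "b \<in> strip p"
    using assms convex_hull_strip_subset_box by (intro Pts_in_box_imp_strip) (auto simp: Pts_def)
  then show False
    using assms blue_notin_strip by (auto simp: mem_Blue)
qed

lemma strip_eq_image: "strip p = (\<lambda>(i, y). red p i y) ` ({..<width p} \<times> {..D})"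
  by (auto simp: strip_def)

lemma finite_strip [simp]: "finite (strip p)"
  by (simp add: strip_eq_image)

lemma card_strip: "card (strip p) = width p * (D + 1)"
proof -
  have "inj_on (\<lambda>(i, y). red p i y) ({..<width p} \<times> {..D})"
    by (auto simp: inj_on_def dest: red_inj)
  then show ?thesis
    by (simp add: strip_eq_image card_image card_cartesian_product)
qed

lemma Blue_eq_image: "Blue = (\<lambda>(q, j). blue q j) ` ({1..<M} \<times> {..<2 * D})"
proof (intro equalityI subsetI)
  fix z
  assume "z \<in> Blue"
  then obtain q j where "q \<in> {1..<M}" "j < 2 * D" "z = blue q j"
    by (auto simp: mem_Blue)
  then show "z \<in> (\<lambda>(q, j). blue q j) ` ({1..<M} \<times> {..<2 * D})"
    by (intro image_eqI[where x="(q, j)"]) auto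
qed (auto simp: mem_Blue)

lemma finite_Pts: "finite Pts"
  by (simp add: Pts_def Red_def Blue_eq_image)

lemma card_strip_row_le: "card (strip p \<inter> {z. snd z = c}) \<le> width p"
proof -
  have "strip p \<inter> {z. snd z = c} \<subseteq> (\<lambda>i. (3 * real p + real i / real (width p), c)) ` {..<width p}"
    by (auto simp: mem_strip red_def)
  then have "card (strip p \<inter> {z. snd z = c})
      \<le> card ((\<lambda>i. (3 * real p + real i / real (width p), c)) ` {..<width p})"
    by (rule card_mono[rotated]) simp
  also have "\<dots> \<le> width p"
    using card_image_le[of "{..<width p}"] by simp
  finally show ?thesis .
qed

lemma straddling_convex_hull_meets_strip:
  assumes "a \<in> J" "a' \<in> J" "snd a = c" "snd a' = c" "0 \<le> c" "c \<le> real D"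
    and "fst a \<le> 3 * real m" "3 * real m \<le> fst a'"
  shows "convex hull J \<inter> convex hull (strip m) \<noteq> {}"
proof -
  have "(fst a, c) \<in> J" "(fst a', c) \<in> J"
    using assms(1-4) by (metis prod.collapse)+
  then have "(3 * real m, c) \<in> convex hull J"
    using assms(7,8) by (rule horizontal_mem_convex_hull)
  moreover have "(3 * real m, 0) \<in> strip m" "(3 * real m, real D) \<in> strip m"
    using red_in_strip[of 0 m 0] red_in_strip[of 0 m D] by (simp_all add: red_0)
  then have "(3 * real m, c) \<in> convex hull (strip m)"
    using assms(5,6) by (rule vertical_mem_convex_hull)
  ultimately show ?thesis
    by blast
qed

lemma fst_red_range:
  assumes "p \<in> {1..M}" "i < width p"
  shows "3 \<le> fst (red p i y)" "fst (red p i y) \<le> 3 * real M + 1"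
  using assms fst_red_bounds[OF assms(2), of y] by auto

lemma abs_shift_fst_red_less_1:
  assumes "0 \<le> t" "t \<le> \<delta>" "p \<in> {1..M}" "i < width p" "p' \<in> {1..M}" "i' < width p'"
  shows "\<bar>t * (fst (red p' i' y') - fst (red p i y))\<bar> < 1"
proof -
  have "\<bar>fst (red p' i' y') - fst (red p i y)\<bar> \<le> 3 * real M"
    using fst_red_range[OF assms(3,4), of y] fst_red_range[OF assms(5,6), of y'] by linarith
  then have "\<bar>t * (fst (red p' i' y') - fst (red p i y))\<bar> \<le> \<delta> * (3 * real M)"
    using assms(1,2) by (simp add: abs_mult mult_mono)
  then show ?thesis
    using \<delta>_times_3M_less_1 by linarith
qed

lemma blue_y_adjacent_row:
  assumes "y \<le> D" "y' \<le> D" "y' \<noteq> y"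
  obtains j where "j < 2 * D" "blue_y j = real y + \<delta> * sgn (real y' - real y)"
proof (cases "y < y'")
  case True
  then show ?thesis
    using assms that[of y] by (simp add: blue_y_def)
next
  case False
  then have "y' < y" "1 \<le> y"
    using assms(3) by simp_all
  moreover have j: "D + (y - 1) < 2 * D" "\<not> D + (y - 1) < D"
    using assms(1) \<open>1 \<le> y\<close> by auto
  ultimately have "blue_y (D + (y - 1)) = real y + \<delta> * sgn (real y' - real y)"
    unfolding blue_y_def if_not_P[OF j(2)] by (simp add: of_nat_diff)
  with j(1) show ?thesis
    by (rule that)
qed

text \<open>The section of the triangle at the height of the blue row next to row \<open>y\<close>, on the
  side of the third vertex, is shifted by less than the width of the gap after strip \<open>p1\<close>.\<close>
lemma blue_in_convex_hull_red_triangle: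
  assumes p: "1 \<le> p1" "p1 < p2" "p2 \<le> M" "p3 \<in> {1..M}"
    and i: "i1 < width p1" "i2 < width p2" "i3 < width p3"
    and y: "y \<le> D" "y' \<le> D" "y' \<noteq> y"
  shows "\<exists>b\<in>Blue. b \<in> convex hull {red p1 i1 y, red p2 i2 y, red p3 i3 y'}"
proof -
  define a where "a = red p1 i1 y"
  define a' where "a' = red p2 i2 y"
  define q where "q = red p3 i3 y'"
  define t where "t = \<delta> / \<bar>real y' - real y\<bar>"
  have "1 \<le> \<bar>real y' - real y\<bar>"
    using y(3) by (cases "y < y'") auto
  then have t: "0 \<le> t" "t \<le> \<delta>" "t \<le> 1"
    using \<delta>_pos \<delta>_less_half by (auto simp: t_def divide_simps)
  have "p1 \<in> {1..M}" "p2 \<in> {1..M}"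
    using p by auto
  then have "\<bar>t * (fst q - fst a)\<bar> < 1" "\<bar>t * (fst q - fst a')\<bar> < 1"
    unfolding a_def a'_def q_def using t(1,2) i p(4) by (auto intro!: abs_shift_fst_red_less_1)
  moreover have "fst a < 3 * real p1 + 1" "3 * real p1 + 3 \<le> fst a'"
    using fst_red_bounds[OF i(1), of y] fst_red_bounds[OF i(2), of y] p(2) by (simp_all add: a_def a'_def)
  ultimately have "fst a + t * (fst q - fst a) \<le> 3 * real p1 + 2"
    "3 * real p1 + 2 \<le> fst a' + t * (fst q - fst a')"
    by (simp_all add: abs_less_iff)
  then have "(3 * real p1 + 2, real y + t * (snd q - real y)) \<in> convex hull {a, a', q}"
    using t(1,3) by (intro horizontal_section_mem_convex_hull) (simp_all add: a_def a'_def)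
  moreover have "t * (snd q - real y) = \<delta> * sgn (real y' - real y)"
    by (simp add: q_def t_def real_sgn_eq)
  moreover obtain j where j: "j < 2 * D" "blue_y j = real y + \<delta> * sgn (real y' - real y)"
    using y by (rule blue_y_adjacent_row)
  ultimately have "blue p1 j \<in> convex hull {a, a', q}"
    by (simp add: blue_def)
  moreover have "blue p1 j \<in> Blue"
    using p j(1) by (auto simp: mem_Blue)
  ultimately show ?thesis
    by (auto simp: a_def a'_def q_def)
qed

lemma colour_Red: "z \<in> Red \<Longrightarrow> colour z = 0"
  by (auto simp: mem_Red mem_strip)

lemma monochromatic_cases:
  assumes "J \<subseteq> Pts" "monochromatic colour J"
  obtains "J \<subseteq> Red" | j where "j < 2 * D" "J \<subseteq> (\<lambda>q. blue q j) ` {1..<M}"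
proof (cases "J \<subseteq> Red")
  case False
  then obtain z0 where "z0 \<in> J" "z0 \<notin> Red"
    by blast
  then have "z0 \<in> Blue"
    using assms(1) by (auto simp: Pts_def)
  then obtain q0 j where "j < 2 * D" "z0 = blue q0 j"
    by (auto simp: mem_Blue)
  then have z0: "blue q0 j \<in> J" "j < 2 * D"
    using \<open>z0 \<in> J\<close> by simp_all
  have "z \<in> (\<lambda>q. blue q j) ` {1..<M}" if "z \<in> J" for z
  proof -
    have "colour z = colour (blue q0 j)"
      using assms(2) that z0(1) unfolding monochromatic_def by blast
    then have "colour z = Suc j"
      using colour_blue[OF z0(2)] by simp
    then have "z \<in> Blue"
      using that assms(1) colour_Red[of z] by (auto simp: Pts_def)
    then obtain q j' where "q \<in> {1..<M}" "j' < 2 * D" "z = blue q j'"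
      by (auto simp: mem_Blue)
    moreover have "j' = j"
      using \<open>colour z = Suc j\<close> colour_blue calculation by simp
    ultimately show ?thesis
      by simp
  qed
  then show ?thesis
    using z0(2) that(2) by blast
qed

lemma blue_island_same_block:
  assumes "j < 2 * D" "blue q0 j \<in> J" "blue q j \<in> J" "q0 \<le> q" "q < M"
    and blocked: "\<And>m. m \<in> {1..M} \<Longrightarrow> H dvd m \<Longrightarrow> convex hull J \<inter> convex hull (strip m) = {}"
  shows "q div H = q0 div H"
proof (rule div_eq_if_no_multiple_between[OF assms(4)])
  fix m
  assume m: "q0 < m" "m \<le> q"
  have "convex hull J \<inter> convex hull (strip m) \<noteq> {}"
  proof (rule straddling_convex_hull_meets_strip)
    show "blue q0 j \<in> J" "blue q j \<in> J"
      by (fact assms(2,3))+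
    show "0 \<le> blue_y j" "blue_y j \<le> real D"
      using blue_y_bounds[OF assms(1)] by simp_all
    show "fst (blue q0 j) \<le> 3 * real m" "3 * real m \<le> fst (blue q j)"
      using m by (simp_all add: blue_def)
  qed (simp_all add: blue_def)
  moreover have "m \<in> {1..M}"
    using m assms(5) by auto
  ultimately show "\<not> H dvd m"
    using blocked by auto
qed

lemma card_blue_island_le:
  assumes "0 < H" "j < 2 * D" "J \<subseteq> (\<lambda>q. blue q j) ` {1..<M}"
    and blocked: "\<And>m. m \<in> {1..M} \<Longrightarrow> H dvd m \<Longrightarrow> convex hull J \<inter> convex hull (strip m) = {}"
  shows "card J \<le> H"
proof (cases "J = {}")
  case False
  define Q where "Q = {q \<in> {1..<M}. blue q j \<in> J}"
  have J_eq: "J = (\<lambda>q. blue q j) ` Q"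
    using assms(3) by (auto simp: Q_def)
  have "finite Q" "Q \<noteq> {}"
    using False unfolding J_eq by (simp_all add: Q_def)
  define q0 where "q0 = Min Q"
  have q0: "q0 \<in> Q" "\<And>q. q \<in> Q \<Longrightarrow> q0 \<le> q"
    using \<open>finite Q\<close> \<open>Q \<noteq> {}\<close> by (simp_all add: q0_def)
  have "q div H = q0 div H" if "q \<in> Q" for q
    using that q0 by (intro blue_island_same_block[OF assms(2) _ _ _ _ blocked]) (auto simp: Q_def)
  then have Q_sub: "Q \<subseteq> {q. q div H = q0 div H}"
    by blast
  have "finite {q. q div H = q0 div H}"
    using card_div_fibre[OF assms(1)] assms(1) by (intro card_ge_0_finite) simp
  have "card J \<le> card Q"
    unfolding J_eq using \<open>finite Q\<close> by (rule card_image_le)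
  also have "\<dots> \<le> card {q. q div H = q0 div H}"
    using \<open>finite {q. q div H = q0 div H}\<close> Q_sub by (rule card_mono)
  also have "\<dots> = H"
    using assms(1) by (rule card_div_fibre)
  finally show ?thesis .
qed simp

lemma finite_Red: "finite Red"
  using finite_Pts finite_subset by (auto simp: Pts_def)

lemma red_island_row_within_strip:
  assumes J: "J \<subseteq> Red" "convex hull J \<inter> Blue = {}" "r \<in> J" "snd r \<noteq> real y"
    and p: "p \<in> {1..M}" "p' \<in> {1..M}"
    and a: "a \<in> J" "a \<in> strip p" "snd a = real y"
    and a': "a' \<in> J" "a' \<in> strip p'" "snd a' = real y"
  shows "p = p'"
proof (rule ccontr)
  assume "p \<noteq> p'"
  obtain i where i: "i < width p" "a = red p i y" "y \<le> D"
    using a(2,3) by (auto simp: mem_strip)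
  obtain i' where i': "i' < width p'" "a' = red p' i' y"
    using a'(2,3) by (auto simp: mem_strip)
  have "r \<in> Red"
    using J(1,3) by blast
  then obtain p3 i3 y3 where r: "p3 \<in> {1..M}" "i3 < width p3" "y3 \<le> D" "r = red p3 i3 y3"
    by (auto simp: mem_Red mem_strip)
  have "y3 \<noteq> y"
    using J(4) r(4) by auto
  have "\<exists>b\<in>Blue. b \<in> convex hull {a, a', r}"
  proof (cases "p < p'")
    case True
    then show ?thesis
      using blue_in_convex_hull_red_triangle[of p p' p3 i i' i3 y y3] p i i' r \<open>y3 \<noteq> y\<close> by auto
  next
    case False
    then have "p' < p"
      using \<open>p \<noteq> p'\<close> by simp
    then show ?thesis
      using blue_in_convex_hull_red_triangle[of p' p p3 i' i i3 y y3] p i i' r \<open>y3 \<noteq> y\<close>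
      by (auto simp: insert_commute)
  qed
  moreover have "convex hull {a, a', r} \<subseteq> convex hull J"
    using a(1) a'(1) J(3) by (intro hull_mono) auto
  ultimately show False
    using J(2) by auto
qed

lemma card_red_island_row_le:
  assumes J: "J \<subseteq> Red" "convex hull J \<inter> Blue = {}" "s \<in> J" "snd s \<noteq> real y"
    and narrow: "\<And>p. p \<in> {1..M} \<Longrightarrow> J \<inter> strip p \<noteq> {} \<Longrightarrow> width p \<le> W"
  shows "card (J \<inter> {z. snd z = real y}) \<le> W"
proof (cases "J \<inter> {z. snd z = real y} = {}")
  case False
  then obtain a where a: "a \<in> J" "snd a = real y"
    by blast
  then have "a \<in> Red"
    using J(1) by blast
  then obtain p where p: "p \<in> {1..M}" "a \<in> strip p"
    by (auto simp: mem_Red)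
  have "J \<inter> {z. snd z = real y} \<subseteq> strip p \<inter> {z. snd z = real y}"
  proof
    fix z
    assume z: "z \<in> J \<inter> {z. snd z = real y}"
    then have "z \<in> Red"
      using J(1) by blast
    then obtain p' where p': "p' \<in> {1..M}" "z \<in> strip p'"
      by (auto simp: mem_Red)
    moreover have "z \<in> J" "snd z = real y"
      using z by auto
    ultimately have "p = p'"
      by (intro red_island_row_within_strip[OF J p(1) _ a(1) p(2) a(2)])
    then show "z \<in> strip p \<inter> {z. snd z = real y}"
      using z p' by simp
  qed
  then have "card (J \<inter> {z. snd z = real y}) \<le> card (strip p \<inter> {z. snd z = real y})"
    by (rule card_mono[rotated]) simp
  also have "\<dots> \<le> width p"
    by (rule card_strip_row_le)
  also have "\<dots> \<le> W"
    using p a(1) by (intro narrow) auto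
  finally show ?thesis .
qed simp

lemma card_red_island_two_rows_le:
  assumes J: "J \<subseteq> Red" "convex hull J \<inter> Blue = {}" "r \<in> J" "r' \<in> J" "snd r \<noteq> snd r'"
    and narrow: "\<And>p. p \<in> {1..M} \<Longrightarrow> J \<inter> strip p \<noteq> {} \<Longrightarrow> width p \<le> W"
  shows "card J \<le> (D + 1) * W"
proof -
  have row: "card (J \<inter> {z. snd z = real y}) \<le> W" for y
  proof (cases "snd r = real y")
    case True
    then show ?thesis
      using J narrow by (intro card_red_island_row_le[of J r']) auto
  qed (use J narrow in \<open>intro card_red_island_row_le[of J r]\<close>)
  have "J \<subseteq> (\<Union>y\<in>{..D}. J \<inter> {z. snd z = real y})"
  proof
    fix z
    assume "z \<in> J"
    then have "z \<in> Red"
      using J(1) by blast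
    then obtain p i y where "y \<le> D" "z = red p i y"
      by (auto simp: mem_Red mem_strip)
    then show "z \<in> (\<Union>y\<in>{..D}. J \<inter> {z. snd z = real y})"
      using \<open>z \<in> J\<close> by auto
  qed
  moreover have "finite J"
    using J(1) finite_Red finite_subset by blast
  ultimately have "card J \<le> card (\<Union>y\<in>{..D}. J \<inter> {z. snd z = real y})"
    by (intro card_mono) auto
  also have "\<dots> \<le> (\<Sum>y\<le>D. card (J \<inter> {z. snd z = real y}))"
    by (rule card_UN_le) simp
  also have "\<dots> \<le> (\<Sum>y\<le>D. W)"
    using row by (rule sum_mono)
  finally show ?thesis
    by simp
qed

lemma red_row_island_same_block:
  assumes J: "J \<subseteq> {z. snd z = c}" "a \<in> J" "a \<in> strip p0" "a' \<in> J" "a' \<in> strip p"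
    and "p0 \<le> p" "p \<le> M"
    and blocked: "\<And>m. m \<in> {1..M} \<Longrightarrow> H dvd m \<Longrightarrow> convex hull J \<inter> convex hull (strip m) = {}"
  shows "p div H = p0 div H"
proof (rule div_eq_if_no_multiple_between[OF assms(6)])
  fix m
  assume m: "p0 < m" "m \<le> p"
  have "a \<in> {3 * real p0..3 * real p0 + 1} \<times> {0..real D}" "a' \<in> {3 * real p..3 * real p + 1} \<times> {0..real D}"
    using J(3,5) strip_subset_box by blast+
  moreover have "3 * real p0 + 1 \<le> 3 * real m" "3 * real m \<le> 3 * real p"
    using m by simp_all
  ultimately have "convex hull J \<inter> convex hull (strip m) \<noteq> {}"
    using J(1,2,4) by (intro straddling_convex_hull_meets_strip[of a J a' c]) auto
  moreover have "m \<in> {1..M}"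
    using m assms(7) by auto
  ultimately show "\<not> H dvd m"
    using blocked by auto
qed

lemma red_row_island_strip_in_block:
  assumes "J \<subseteq> {z. snd z = c}" "J \<inter> strip p0 \<noteq> {}" "J \<inter> strip p \<noteq> {}" "p0 \<le> p"
    and "p \<in> {1..M}" "0 < H"
    and blocked: "\<And>m. m \<in> {1..M} \<Longrightarrow> H dvd m \<Longrightarrow> convex hull J \<inter> convex hull (strip m) = {}"
  shows "p \<in> {H * (p0 div H)<..<H * (p0 div H) + H}"
proof (rule mem_block_if_not_dvd)
  obtain a a' where "a \<in> J" "a \<in> strip p0" "a' \<in> J" "a' \<in> strip p"
    using assms(2,3) by blast
  then show "p div H = p0 div H"
    using assms(4,5) by (intro red_row_island_same_block[OF assms(1) _ _ _ _ _ _ blocked]) auto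
  show "\<not> H dvd p"
    using blocked[OF assms(5)] convex_hull_Int_nonempty[OF assms(3)] by auto
qed (rule assms(6))

lemma card_row_le_sum_width:
  assumes "J \<subseteq> {z. snd z = c}" "J \<subseteq> (\<Union>p\<in>P. strip p)" "finite P"
  shows "card J \<le> (\<Sum>p\<in>P. width p)"
proof -
  have "card J \<le> card (\<Union>p\<in>P. strip p \<inter> {z. snd z = c})"
    using assms by (intro card_mono) auto
  also have "\<dots> \<le> (\<Sum>p\<in>P. card (strip p \<inter> {z. snd z = c}))"
    by (rule card_UN_le[OF assms(3)])
  also have "\<dots> \<le> (\<Sum>p\<in>P. width p)"
    by (intro sum_mono card_strip_row_le)
  finally show ?thesis .
qed

text \<open>A single-row island avoiding the strips with index divisible by \<open>2 ^ Suc h\<close> can only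
  meet the strips of one dyadic block, whose widths sum to \<open>Suc h * 2 ^ h\<close>.\<close>
lemma card_red_island_one_row_le:
  assumes J: "J \<subseteq> Red" "J \<subseteq> {z. snd z = c}"
    and blocked: "\<And>m. m \<in> {1..M} \<Longrightarrow> 2 ^ Suc h dvd m \<Longrightarrow>
      convex hull J \<inter> convex hull (strip m) = {}"
  shows "card J \<le> Suc h * 2 ^ h"
proof (cases "J = {}")
  case False
  define H where "H = (2::nat) ^ Suc h"
  define P where "P = {p \<in> {1..M}. J \<inter> strip p \<noteq> {}}"
  have "finite P"
    by (simp add: P_def)
  have J_sub: "J \<subseteq> (\<Union>p\<in>P. strip p)"
  proof
    fix z
    assume "z \<in> J"
    then have "z \<in> Red"
      using J(1) by blast
    then obtain p where "p \<in> {1..M}" "z \<in> strip p"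
      by (auto simp: mem_Red)
    then show "z \<in> (\<Union>p\<in>P. strip p)"
      using \<open>z \<in> J\<close> by (auto simp: P_def)
  qed
  then have "P \<noteq> {}"
    using False by auto
  define p0 where "p0 = Min P"
  have p0: "p0 \<in> P" "\<And>p. p \<in> P \<Longrightarrow> p0 \<le> p"
    using \<open>finite P\<close> \<open>P \<noteq> {}\<close> by (simp_all add: p0_def)
  define b where "b = H * (p0 div H)"
  have P_sub: "P \<subseteq> {b<..<b + H}"
  proof
    fix p
    assume "p \<in> P"
    then show "p \<in> {b<..<b + H}"
      unfolding b_def using p0 J(2) blocked[folded H_def]
      by (intro red_row_island_strip_in_block) (auto simp: P_def H_def)
  qed
  have "card J \<le> (\<Sum>p\<in>P. width p)"
    using J(2) J_sub \<open>finite P\<close> by (rule card_row_le_sum_width)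
  also have "\<dots> \<le> (\<Sum>p\<in>{b<..<b + H}. width p)"
    by (rule sum_mono2[OF _ P_sub]) auto
  also have "\<dots> = Suc h * 2 ^ h"
  proof -
    have "2 * (\<Sum>p\<in>{b<..<b + H}. width p) = Suc h * 2 ^ Suc h"
      unfolding width_def H_def by (rule sum_power_multiplicity_dyadic_block) (simp add: b_def H_def)
    then show ?thesis
      by simp
  qed
  finally show ?thesis .
qed simp

lemma island_Red_convex_hull_Int_Blue:
  assumes "island Pts J" "J \<subseteq> Red"
  shows "convex hull J \<inter> Blue = {}"
  using assms Red_Blue_disjoint by (auto simp: island_def Pts_def)

lemma card_red_candidate_le:
  assumes J: "island Pts J" "J \<subseteq> Red" and "h \<le> D"
    and blocked: "\<And>m. m \<in> {1..M} \<Longrightarrow> h < multiplicity 2 m \<Longrightarrow>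
      convex hull J \<inter> convex hull (strip m) = {}"
  shows "card J \<le> (D + 1) * 2 ^ h"
proof (cases "\<exists>r\<in>J. \<exists>r'\<in>J. snd r \<noteq> snd r'")
  case True
  then obtain r r' where r: "r \<in> J" "r' \<in> J" "snd r \<noteq> snd r'"
    by blast
  have "width p \<le> 2 ^ h" if p: "p \<in> {1..M}" "J \<inter> strip p \<noteq> {}" for p
  proof -
    have "multiplicity 2 p \<le> h"
      using blocked p convex_hull_Int_nonempty[of J "strip p"] by fastforce
    then show ?thesis
      by (simp add: width_def power_increasing)
  qed
  then show ?thesis
    using island_Red_convex_hull_Int_Blue[OF J] J(2) r by (intro card_red_island_two_rows_le) auto
next
  case False
  show ?thesis
  proof (cases "J = {}")
    case False
    then obtain r where "r \<in> J"
      by blast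
    then have "J \<subseteq> {z. snd z = snd r}"
      using \<open>\<not> (\<exists>r\<in>J. \<exists>r'\<in>J. snd r \<noteq> snd r')\<close> by blast
    moreover have "convex hull J \<inter> convex hull (strip m) = {}" if "m \<in> {1..M}" "2 ^ Suc h dvd m" for m
      using that blocked power2_dvd_iff_le_multiplicity[of m "Suc h"] by simp
    ultimately have "card J \<le> Suc h * 2 ^ h"
      using J(2) by (intro card_red_island_one_row_le)
    also have "\<dots> \<le> (D + 1) * 2 ^ h"
      using \<open>h \<le> D\<close> by simp
    finally show ?thesis .
  qed simp
qed

lemma card_candidate_le:
  assumes J: "island Pts J" "monochromatic colour J" and "h \<le> D"
    and blocked: "\<And>m. m \<in> {1..M} \<Longrightarrow> h < multiplicity 2 m \<Longrightarrow>
      convex hull J \<inter> convex hull (strip m) = {}"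
  shows "card J \<le> (D + 1) * 2 ^ h"
proof -
  have "J \<subseteq> Pts"
    using J(1) by (simp add: island_def)
  from this J(2) show ?thesis
  proof (cases rule: monochromatic_cases)
    case 1
    show ?thesis
      by (rule card_red_candidate_le[OF J(1) \<open>J \<subseteq> Red\<close> \<open>h \<le> D\<close> blocked])
  next
    case (2 j)
    have "convex hull J \<inter> convex hull (strip m) = {}" if "m \<in> {1..M}" "2 ^ Suc h dvd m" for m
      using that blocked power2_dvd_iff_le_multiplicity[of m "Suc h"] by simp
    then have "card J \<le> 2 ^ Suc h"
      using 2 by (intro card_blue_island_le) simp_all
    also have "\<dots> \<le> (D + 1) * 2 ^ h"
      using D_pos by simp
    finally show ?thesis .
  qed
qed

lemma card_candidate_le_1:
  assumes J: "island Pts J" "monochromatic colour J"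
    and blocked: "\<And>m. m \<in> {1..M} \<Longrightarrow> convex hull J \<inter> convex hull (strip m) = {}"
  shows "card J \<le> 1"
proof -
  have "J \<subseteq> Pts"
    using J(1) by (simp add: island_def)
  from this J(2) show ?thesis
  proof (cases rule: monochromatic_cases)
    case 1
    have "J = {}"
    proof (rule ccontr)
      assume "J \<noteq> {}"
      then obtain z where "z \<in> J"
        by blast
      then have "z \<in> Red"
        using 1 by blast
      then obtain m where "m \<in> {1..M}" "z \<in> strip m"
        by (auto simp: mem_Red)
      then show False
        using blocked[of m] \<open>z \<in> J\<close> convex_hull_Int_nonempty[of J "strip m"] by auto
    qed
    then show ?thesis
      by simp
  next
    case (2 j)
    then show ?thesis
      using blocked by (intro card_blue_island_le[of 1]) simp_all
  qed
qed

definition strip_order :: "nat list" where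
  "strip_order = sort_key (\<lambda>p. D - multiplicity 2 p) [1..<Suc M]"

definition blue_points :: "point list" where
  "blue_points = map (\<lambda>(q, j). blue q j) (List.product [1..<M] [0..<2 * D])"

definition greedy_islands :: "point set list" where
  "greedy_islands = map strip strip_order @ map (\<lambda>b. {b}) blue_points"

lemma set_strip_order: "set strip_order = {1..M}"
  by (auto simp: strip_order_def)

lemma length_strip_order: "length strip_order = M"
  by (simp add: strip_order_def length_sort)

lemma strip_order_nth_notin_take: "j < M \<Longrightarrow> strip_order ! j \<notin> set (take j strip_order)"
  by (intro nth_notin_set_take) (simp_all add: strip_order_def length_sort)

lemma strip_order_prefix:
  assumes "j < M" "p \<in> {1..M}" "multiplicity 2 (strip_order ! j) < multiplicity 2 p"
  shows "p \<in> set (take j strip_order)"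
proof (rule sorted_key_less_in_set_take)
  show "sorted (map (\<lambda>p. D - multiplicity 2 p) strip_order)"
    unfolding strip_order_def by (rule sorted_sort_key)
  show "j < length strip_order" "p \<in> set strip_order"
    using assms(1,2) by (simp_all add: length_strip_order set_strip_order)
  have "strip_order ! j \<in> {1..M}"
    using assms(1) nth_mem[of j strip_order] by (simp add: length_strip_order set_strip_order)
  then show "D - multiplicity 2 p < D - multiplicity 2 (strip_order ! j)"
    using assms(3) multiplicity_le_D[OF assms(2)] by simp
qed

lemma set_blue_points: "set blue_points = Blue"
  by (simp add: blue_points_def Blue_eq_image lessThan_atLeast0)

lemma distinct_blue_points: "distinct blue_points"
proof -
  have "inj_on (\<lambda>(q, j). blue q j) (set (List.product [1..<M] [0..<2 * D]))"
    using blue_y_inj by (auto simp: inj_on_def blue_def)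
  then show ?thesis
    by (simp add: blue_points_def distinct_map distinct_product)
qed

lemma length_greedy_islands: "length greedy_islands = M + (M - 1) * (2 * D)"
  by (simp add: greedy_islands_def blue_points_def length_strip_order)

lemma union_greedy_islands: "\<Union>(set greedy_islands) = Pts"
  by (auto simp: greedy_islands_def Pts_def Red_def set_strip_order set_blue_points)

lemma greedy_choice_strip:
  assumes "j < M"
  shows "greedy_choice Pts colour (take j greedy_islands) (greedy_islands ! j)"
proof -
  define p where "p = strip_order ! j"
  define P where "P = set (take j strip_order)"
  have prefix: "take j greedy_islands = map strip (take j strip_order)"
    using assms by (simp add: greedy_islands_def length_strip_order take_map)
  have nth: "greedy_islands ! j = strip p"
    using assms by (simp add: greedy_islands_def length_strip_order nth_append p_def)
  have p: "p \<in> {1..M}" "p \<notin> P"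
    using assms nth_mem[of j strip_order] strip_order_nth_notin_take[OF assms]
    by (simp_all add: p_def P_def length_strip_order set_strip_order)
  have "strip p \<inter> strip m = {}" if "m \<in> P" for m
    using p(2) that strips_disjoint by metis
  moreover have "\<Union>(set (take j greedy_islands)) = (\<Union>m\<in>P. strip m)"
    by (simp add: prefix P_def)
  ultimately have "strip p \<inter> \<Union>(set (take j greedy_islands)) = {}"
    by blast
  moreover have "red p 0 0 \<in> strip p"
    by (simp add: red_in_strip)
  moreover have "convex hull strip p \<inter> convex hull strip m = {}" if "m \<in> P" for m
    using p(2) that convex_hull_strips_disjoint by metis
  then have "greedy_candidate Pts colour (take j greedy_islands) (strip p)"
    unfolding greedy_candidate_def island_def
    using strip_subset_Pts[OF p(1)] convex_hull_strip_Int_Pts[OF p(1)]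
    by (auto simp: monochromatic_def mem_strip prefix P_def)
  moreover have "card J \<le> card (strip p)" if "greedy_candidate Pts colour (take j greedy_islands) J" for J
  proof -
    have J: "island Pts J" "monochromatic colour J"
      and avoid: "\<And>m. m \<in> P \<Longrightarrow> convex hull J \<inter> convex hull (strip m) = {}"
      using that by (auto simp: greedy_candidate_def prefix P_def)
    have "card J \<le> (D + 1) * 2 ^ multiplicity 2 p"
      using J multiplicity_le_D[OF p(1)] avoid strip_order_prefix[OF assms]
      by (intro card_candidate_le) (auto simp: p_def P_def)
    then show ?thesis
      by (simp add: card_strip width_def mult.commute)
  qed
  ultimately show ?thesis
    by (auto simp: greedy_choice_def nth)
qed

lemma greedy_choice_blue:
  assumes "M \<le> j" "j < length greedy_islands"
  shows "greedy_choice Pts colour (take j greedy_islands) (greedy_islands ! j)"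
proof -
  define k where "k = j - M"
  define b where "b = blue_points ! k"
  have k: "k < length blue_points"
    using assms by (simp add: k_def greedy_islands_def length_strip_order)
  have prefix: "take j greedy_islands = map strip strip_order @ map (\<lambda>b. {b}) (take k blue_points)"
    using assms(1) by (simp add: greedy_islands_def length_strip_order take_map k_def)
  have nth: "greedy_islands ! j = {b}"
    using assms k by (simp add: greedy_islands_def length_strip_order nth_append b_def k_def)
  have b: "b \<in> Blue" "b \<notin> set (take k blue_points)"
    using nth_mem[OF k] nth_notin_set_take[OF distinct_blue_points k]
    by (simp_all add: b_def set_blue_points)
  have "b \<notin> Red"
    using b(1) Red_Blue_disjoint by blast
  then have "{b} \<inter> \<Union>(set (take j greedy_islands)) = {}"
    using b(2) by (auto simp: prefix Red_def set_strip_order)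
  moreover have "greedy_candidate Pts colour (take j greedy_islands) {b}"
    unfolding greedy_candidate_def island_def monochromatic_def
    using b Blue_disjoint_convex_hull_strip[OF b(1)] by (auto simp: prefix Pts_def)
  moreover have "card J \<le> card {b}" if "greedy_candidate Pts colour (take j greedy_islands) J" for J
  proof -
    have J: "island Pts J" "monochromatic colour J"
      and avoid: "\<And>m. m \<in> {1..M} \<Longrightarrow> convex hull J \<inter> convex hull (strip m) = {}"
      using that by (auto simp: greedy_candidate_def prefix set_strip_order)
    show ?thesis
      using card_candidate_le_1[OF J avoid] by simp
  qed
  ultimately show ?thesis
    by (auto simp: greedy_choice_def nth)
qed

lemma greedy_run_greedy_islands: "greedy_run Pts colour greedy_islands"
proof (rule greedy_run_if_greedy_choice[OF finite_Pts union_greedy_islands])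
  fix j
  assume "j < length greedy_islands"
  then show "greedy_choice Pts colour (take j greedy_islands) (greedy_islands ! j)"
    using greedy_choice_strip greedy_choice_blue by (cases "j < M") auto
qed

lemma sum_width: "(\<Sum>p\<in>{1..M}. width p) = (D + 1) * 2 ^ D"
proof -
  have "{1..M} = {0<..<0 + 2 ^ Suc D}"
    using M_plus_1 by auto
  moreover have "2 * (\<Sum>p\<in>{0<..<0 + 2 ^ Suc D}. width p) = Suc D * 2 ^ Suc D"
    unfolding width_def by (rule sum_power_multiplicity_dyadic_block) simp
  ultimately show ?thesis
    by simp
qed

lemma card_Pts_le: "card Pts \<le> (D + 1) * (D + 1) * 2 ^ D + (M - 1) * (2 * D)"
proof -
  have "card Red \<le> (\<Sum>p\<in>{1..M}. card (strip p))"
    unfolding Red_def by (rule card_UN_le) simp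
  also have "\<dots> = (\<Sum>p\<in>{1..M}. width p) * (D + 1)"
    unfolding card_strip by (rule sum_distrib_right[symmetric])
  also have "\<dots> = (D + 1) * (D + 1) * 2 ^ D"
    by (simp only: sum_width) (simp add: algebra_simps)
  finally have "card Red \<le> (D + 1) * (D + 1) * 2 ^ D" .
  moreover have "card Blue \<le> (M - 1) * (2 * D)"
  proof -
    have "card Blue \<le> length blue_points"
      using card_length[of blue_points] by (simp only: set_blue_points)
    then show ?thesis
      by (simp add: blue_points_def)
  qed
  moreover have "card Pts \<le> card Red + card Blue"
    unfolding Pts_def by (rule card_Un_le)
  ultimately show ?thesis
    by linarith
qed

lemma card_Pts_ge: "(D + 1) * 2 ^ D \<le> card Pts"
proof -
  have "2 ^ D \<in> {1..M}"
    using M_ge by simp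
  then have "card (strip (2 ^ D)) \<le> card Pts"
    by (intro card_mono finite_Pts strip_subset_Pts)
  moreover have "multiplicity 2 ((2::nat) ^ D) = D"
    using multiplicity_2_power_times_odd[of 1 D] by simp
  ultimately show ?thesis
    by (simp add: card_strip width_def mult.commute)
qed

lemma colour_range: "colour ` Pts \<subseteq> {..<2 * D + 1}"
  using colour_blue colour_Red by (auto simp: Pts_def mem_Blue)

lemma snd_Pts_subset: "snd ` Pts \<subseteq> real ` {..D} \<union> blue_y ` {..<2 * D}"
proof
  fix c
  assume "c \<in> snd ` Pts"
  then obtain z where z: "z \<in> Pts" "c = snd z"
    by blast
  show "c \<in> real ` {..D} \<union> blue_y ` {..<2 * D}"
  proof (cases "z \<in> Red")
    case True
    then obtain p i y where "y \<le> D" "z = red p i y"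
      by (auto simp: mem_Red mem_strip)
    then show ?thesis
      using z(2) by simp
  next
    case False
    then obtain q j where "j < 2 * D" "z = blue q j"
      using z(1) by (auto simp: Pts_def mem_Blue)
    then show ?thesis
      using z(2) by (simp add: blue_def)
  qed
qed

lemma Opt_P_le: "Opt_P Pts colour \<le> 3 * D + 1"
proof -
  have "Opt_P Pts colour \<le> card (snd ` Pts)"
    by (rule Opt_P_le_card_rows[of Pts colour "\<lambda>c. colour (0, c)"]) (simp_all add: colour_def finite_Pts)
  also have "\<dots> \<le> card (real ` {..D} \<union> blue_y ` {..<2 * D})"
    using snd_Pts_subset by (rule card_mono[rotated]) simp
  also have "\<dots> \<le> card (real ` {..D}) + card (blue_y ` {..<2 * D})"
    by (rule card_Un_le)
  also have "\<dots> \<le> (D + 1) + 2 * D"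
    using card_image_le[of "{..D}" real] card_image_le[of "{..<2 * D}" blue_y] by simp
  finally show ?thesis
    by simp
qed

lemma real_M: "real M = 2 * 2 ^ D - 1" "real (M - 1) = 2 * 2 ^ D - 2"
proof -
  have "real (M + 1) = 2 * 2 ^ D"
    unfolding M_plus_1 by simp
  then show "real M = 2 * 2 ^ D - 1"
    by simp
  moreover have "1 \<le> M"
    using M_ge by simp
  ultimately show "real (M - 1) = 2 * 2 ^ D - 2"
    by (simp add: of_nat_diff)
qed

lemma two_le_power_D: "(2::real) \<le> 2 ^ D"
  using power_increasing[OF D_pos, of "2::real"] by simp

lemma real_card_Pts_le: "real (card Pts) \<le> 16 * real D ^ 2 * 2 ^ D"
proof -
  define d where "d = real D"
  have d: "1 \<le> d"
    using D_pos by (simp add: d_def)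
  have "real (card Pts) \<le> real ((D + 1) * (D + 1) * 2 ^ D + (M - 1) * (2 * D))"
    using card_Pts_le by (simp only: of_nat_le_iff)
  also have "\<dots> = (d + 1) * (d + 1) * 2 ^ D + real (M - 1) * (2 * d)"
    by (simp only: of_nat_add of_nat_mult of_nat_power of_nat_numeral of_nat_1 d_def)
  also have "\<dots> = (d + 1) * (d + 1) * 2 ^ D + (2 * 2 ^ D - 2) * (2 * d)"
    by (simp only: real_M(2))
  also have "\<dots> = (d * d + 6 * d + 1) * 2 ^ D - 4 * d"
    by (simp add: algebra_simps)
  also have "\<dots> \<le> (16 * d ^ 2) * 2 ^ D"
  proof -
    have "d * 1 \<le> d * d" "1 * 1 \<le> d * d"
      using d by (intro mult_mono; simp)+
    then have "d * d + 6 * d + 1 \<le> 16 * d ^ 2"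
      by (simp add: power2_eq_square)
    then have "(d * d + 6 * d + 1) * 2 ^ D \<le> (16 * d ^ 2) * 2 ^ D"
      by (rule mult_right_mono) simp
    then show ?thesis
      using d by linarith
  qed
  finally show ?thesis
    by (simp add: d_def)
qed

lemma ln_card_Pts_ge: "real D / 2 \<le> ln (real (card Pts))"
proof -
  have "real D * (1 / 2) \<le> real D * ln 2"
    using ln2_ge_two_thirds by (intro mult_left_mono) simp_all
  also have "\<dots> = ln (2 ^ D)"
    by (simp add: ln_realpow)
  also have "\<dots> \<le> ln (real (card Pts))"
  proof (rule ln_mono)
    have "(2::real) ^ D \<le> real ((D + 1) * 2 ^ D)"
      by simp
    also have "\<dots> \<le> real (card Pts)"
      using card_Pts_ge by (simp only: of_nat_le_iff)
    finally show "(2::real) ^ D \<le> real (card Pts)" .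
  qed simp
  finally show ?thesis
    by simp
qed

lemma real_length_greedy_islands_ge: "2 * real D * 2 ^ D \<le> real (length greedy_islands)"
proof -
  have "real (length greedy_islands) = (2 * 2 ^ D - 1) + (2 * 2 ^ D - 2) * (2 * real D)"
    by (simp add: length_greedy_islands real_M[simplified])
  also have "\<dots> = 2 * real D * 2 ^ D + ((2 * 2 ^ D - 1) + 2 * real D * (2 ^ D - 2))"
    by (simp add: algebra_simps)
  also have "\<dots> \<ge> 2 * real D * 2 ^ D"
    using two_le_power_D by simp
  finally show ?thesis .
qed

lemma ratio_bound:
  "1 / 128 * (real (card Pts) / (ln (real (card Pts)))\<^sup>2) * real (Opt_P Pts colour)
     \<le> real (length greedy_islands)"
proof -
  define n where "n = real (card Pts)"
  define d where "d = real D"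
  have d: "1 \<le> d"
    using D_pos by (simp add: d_def)
  have "d / 2 \<le> ln n"
    using ln_card_Pts_ge by (simp add: n_def d_def)
  then have "(d / 2)\<^sup>2 \<le> (ln n)\<^sup>2" "0 < ln n"
    using d by (simp_all add: power_mono)
  then have "n / (ln n)\<^sup>2 \<le> n / (d / 2)\<^sup>2"
    using d by (intro divide_left_mono) (simp_all add: n_def)
  also have "\<dots> \<le> (16 * d ^ 2 * 2 ^ D) / (d / 2)\<^sup>2"
    using real_card_Pts_le by (intro divide_right_mono) (simp_all add: n_def d_def)
  also have "\<dots> = 64 * 2 ^ D"
    using d by (simp add: power2_eq_square)
  finally have "n / (ln n)\<^sup>2 \<le> 64 * 2 ^ D" .
  moreover have "real (Opt_P Pts colour) \<le> 4 * d"
  proof -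
    have "real (Opt_P Pts colour) \<le> real (3 * D + 1)"
      using Opt_P_le by (simp only: of_nat_le_iff)
    then show ?thesis
      using d by (simp add: d_def)
  qed
  ultimately have "n / (ln n)\<^sup>2 * real (Opt_P Pts colour) \<le> (64 * 2 ^ D) * (4 * d)"
    by (rule mult_mono) simp_all
  also have "\<dots> = 128 * (2 * d * 2 ^ D)"
    by simp
  also have "\<dots> \<le> 128 * real (length greedy_islands)"
    using real_length_greedy_islands_ge by (simp add: d_def)
  finally show ?thesis
    by (simp add: n_def)
qed

end

theorem lemma2:
  shows "\<exists>c > (0::real). \<forall>N::nat. \<exists>(S::point set) (col::point \<Rightarrow> nat) (k::nat).
           finite S \<and> 2 \<le> k \<and> col ` S \<subseteq> {..<k} \<and> N \<le> card S \<and>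
           (\<exists>Is. greedy_run S col Is \<and>
              real (length Is) \<ge> c * (real (card S) / (ln (real (card S)))\<^sup>2) * real (Opt_P S col))"
proof (intro exI[of _ "1 / 128"] conjI allI)
  fix N :: nat
  interpret greedy_lower_bound_instance "Suc N"
    by unfold_locales simp
  have "N < 2 ^ Suc N"
    using less_exp[of "Suc N"] by simp
  also have "\<dots> \<le> (Suc N + 1) * 2 ^ Suc N"
    by simp
  also have "\<dots> \<le> card Pts"
    by (rule card_Pts_ge)
  finally have "N \<le> card Pts"
    by simp
  then show "\<exists>S col k. finite S \<and> 2 \<le> k \<and> col ` S \<subseteq> {..<k} \<and> N \<le> card S \<and>
      (\<exists>Is. greedy_run S col Is \<and>
        1 / 128 * (real (card S) / (ln (real (card S)))\<^sup>2) * real (Opt_P S col) \<le> real (length Is))"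
    using finite_Pts colour_range greedy_run_greedy_islands ratio_bound
    by (intro exI[of _ Pts] exI[of _ colour] exI[of _ "2 * Suc N + 1"] conjI exI[of _ greedy_islands])
      simp_all
qed simp

end
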